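(* Let $m\ge1$ and let $Y^1,\dots,Y^m$ be independent copies of the photon-count process $Y=(Y_t)_{t=1}^T$ of an HTMM, and $Y^{(m)}_t=\sum_{k=1}^mY^k_t$. Assume $0<q_{00}<1$, $\theta_1>0$, that $p_{00},p_{10}$ have finite moment generating functions near $0$, and that $M=V\Lambda V^{-1}$ with $\Lambda=\mathrm{diag}(\lambda_0,\dots,\lambda_r)$, $\lambda_r=1$, column $r$ of $V$ equal to $e_r$. Define $\alpha_x,\alpha^0_x$ as below, and $$\mu_t=m\theta_1\sum_{x\in\mathcal S}\alpha_x\lambda_x^{t-1},\qquad \mu^0_t=m\theta_1\sum_{x\in\mathcal S}\alpha^0_x\lambda_x^{t-1}\quad(t\ge1).$$ Then $\mathbb E[Y^{(m)}_t]=\mu_t$ (and if $\nu_0<1$, $\mu_t=m\theta_1\sum_{x=0}^{r-1}(\nu_0\alpha^0_x+(1-\nu_0)\alpha^1_x)\lambda_x^{t-1}$), and the covariance $\Sigma_{tt'}=\mathrm{Cov}(Y^{(m)}_t,Y^{(m)}_{t'})$ is $$\Sigma_{tt}=\frac1m\big(m\theta_1(\theta_3+1)+m-\mu_t\big)\mu_t,$$ $$\Sigma_{tt'}=\frac1m\left[\Big(\theta_2-q_{00}\frac{1-\theta_2}{1-q_{00}}\Big)\mu^0_{t-t'}+\frac{1-\theta_2}{1-q_{00}}\mu^0_{t-t'+1}-\mu_t\right]\mu_{t'}\quad (1\le t'<t\le T).$$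
   Context: HTMM: fix $r\ge1$, $T\ge1$, $\mathcal S=\{0,\dots,r\}$; $q_{xz}\in[0,1]$ ($x\in\mathcal S$, $0\le z\le r-1$) with $\sum_xq_{xz}=1$; column-stochastic $M^\ell$ with column $0$ equal to $e_0$, column $r$ equal to $e_r$, $M^\ell_{xz}=q_{xz}$ for $1\le z\le r-1$; $M^s$ with column $0$ equal to $(q_{00},\dots,q_{r0})^{\mathrm T}$ and $M^s_{xz}=\delta_{xz}$ for $z\ge1$; $M=M^sM^\ell$. $p_{00},p_{10}$ are distributions on $\mathbb N_0$, $p_{x0}:=p_{10}$ for $x\ge1$, $p_{xx'}:=\delta_0$ for $x'\neq0$; $\nu$ a probability vector on $\mathcal S$. Joint law: $\mathbb P(X_0=x_0,X'_t=x'_t,X_t=x_t,Y_t=y_t,1\le t\le T)=\nu_{x_0}\prod_{t}M^\ell_{x'_tx_{t-1}}M^s_{x_tx'_t}p_{x_tx'_t}(y_t)$. Parameters: $\theta_1=\mathbb E[Y_t\mid X'_t=0]$, $\theta_2=q_{00}\mathbb E[Y_t\mid X'_t=X_t=0]/\theta_1$, $\theta_3=\mathrm{Var}[Y_t\mid X'_t=0]/\theta_1^2-1/\theta_1$. Coefficients: $\alpha_x=V_{0x}\frac{\lambda_x}{q_{00}}\sum_z(V^{-1})_{xz}\nu_z$, $\alpha^0_x=\frac{\lambda_x}{q_{00}}V_{0x}(V^{-1})_{x0}$, and for $\nu_0<1$, $\alpha^1_x=\frac{\lambda_x}{q_{00}}V_{0x}\sum_z(V^{-1})_{xz}\nu'_z$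 with $\nu'=\frac{1}{1-\nu_0}(0,\nu_1,\dots,\nu_r)$. Convention $0^0=1$. *)

theory Defs
  imports "HOL-Probability.Probability"
begin

text \<open>Hidden-state HTMM with states 0..r. Matrices are functions on indices in 0..r.\<close>

definition Mell :: "nat \<Rightarrow> (nat \<Rightarrow> nat \<Rightarrow> real) \<Rightarrow> nat \<Rightarrow> nat \<Rightarrow> real" where
  "Mell r q x z = (if z = 0 then (if x = 0 then 1 else 0)
                   else if z = r then (if x = r then 1 else 0)
                   else q x z)"

definition Ms :: "(nat \<Rightarrow> nat \<Rightarrow> real) \<Rightarrow> nat \<Rightarrow> nat \<Rightarrow> real" where
  "Ms q x z = (if z = 0 then q x 0 else (if x = z then 1 else 0))"

definition Mfull :: "nat \<Rightarrow> (nat \<Rightarrow> nat \<Rightarrow> real) \<Rightarrow> nat \<Rightarrow> nat \<Rightarrow> real" where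
  "Mfull r q x z = (\<Sum>y\<le>r. Ms q x y * Mell r q y z)"

definition emis :: "nat pmf \<Rightarrow> nat pmf \<Rightarrow> nat \<Rightarrow> nat \<Rightarrow> nat pmf" where
  "emis p00 p10 x x' = (if x' = 0 then (if x = 0 then p00 else p10) else return_pmf 0)"

text \<open>A sample path: (X_0, [X'_1..X'_T], [X_1..X_T], [Y_1..Y_T]).\<close>
type_synonym path = "nat \<times> nat list \<times> nat list \<times> nat list"

definition htmm_dens :: "nat \<Rightarrow> nat \<Rightarrow> (nat \<Rightarrow> nat \<Rightarrow> real) \<Rightarrow> (nat \<Rightarrow> real)
    \<Rightarrow> nat pmf \<Rightarrow> nat pmf \<Rightarrow> path \<Rightarrow> real" where
  "htmm_dens r T q \<nu> p00 p10 \<omega> =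
    (case \<omega> of (x0, xs', xs, ys) \<Rightarrow>
      (if length xs' = T \<and> length xs = T \<and> length ys = T \<and> x0 \<le> r
          \<and> set xs' \<subseteq> {..r} \<and> set xs \<subseteq> {..r}
       then \<nu> x0 * (\<Prod>t\<in>{1..T}.
              Mell r q (xs' ! (t - 1)) (if t = 1 then x0 else xs ! (t - 2))
              * Ms q (xs ! (t - 1)) (xs' ! (t - 1))
              * pmf (emis p00 p10 (xs ! (t - 1)) (xs' ! (t - 1))) (ys ! (t - 1)))
       else 0))"

definition htmm :: "nat \<Rightarrow> nat \<Rightarrow> (nat \<Rightarrow> nat \<Rightarrow> real) \<Rightarrow> (nat \<Rightarrow> real)
    \<Rightarrow> nat pmf \<Rightarrow> nat pmf \<Rightarrow> path pmf" where
  "htmm r T q \<nu> p00 p10 = embed_pmf (htmm_dens r T q \<nu> p00 p10)"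

text \<open>Photon count Y_t of a path (t \<ge> 1).\<close>
definition Yobs :: "nat \<Rightarrow> path \<Rightarrow> nat" where
  "Yobs t \<omega> = (case \<omega> of (x0, xs', xs, ys) \<Rightarrow> ys ! (t - 1))"

definition htmm_copies :: "nat \<Rightarrow> path pmf \<Rightarrow> (nat \<Rightarrow> path) pmf" where
  "htmm_copies m P = Pi_pmf {..<m} undefined (\<lambda>_. P)"

definition Ysum :: "nat \<Rightarrow> nat \<Rightarrow> (nat \<Rightarrow> path) \<Rightarrow> real" where
  "Ysum m t \<omega> = real (\<Sum>k<m. Yobs t (\<omega> k))"

definition pmf_cov :: "'a pmf \<Rightarrow> ('a \<Rightarrow> real) \<Rightarrow> ('a \<Rightarrow> real) \<Rightarrow> real" where
  "pmf_cov P X Z = measure_pmf.expectation P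
     (\<lambda>\<omega>. (X \<omega> - measure_pmf.expectation P X) * (Z \<omega> - measure_pmf.expectation P Z))"

text \<open>Parameters theta: conditional moments of Y_t given X'_t = 0, where under the
 model X_t | X'_t=0 has law (q_{x0})_x and Y_t | (X_t=x, X'_t=0) ~ p_{x0}.\<close>
definition mean_pmf :: "nat pmf \<Rightarrow> real" where
  "mean_pmf p = measure_pmf.expectation p real"

definition mom2_pmf :: "nat pmf \<Rightarrow> real" where
  "mom2_pmf p = measure_pmf.expectation p (\<lambda>n. (real n)^2)"

definition theta1 :: "(nat \<Rightarrow> nat \<Rightarrow> real) \<Rightarrow> nat pmf \<Rightarrow> nat pmf \<Rightarrow> real" where
  "theta1 q p00 p10 = q 0 0 * mean_pmf p00 + (1 - q 0 0) * mean_pmf p10"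

definition theta2 :: "(nat \<Rightarrow> nat \<Rightarrow> real) \<Rightarrow> nat pmf \<Rightarrow> nat pmf \<Rightarrow> real" where
  "theta2 q p00 p10 = q 0 0 * mean_pmf p00 / theta1 q p00 p10"

definition theta3 :: "(nat \<Rightarrow> nat \<Rightarrow> real) \<Rightarrow> nat pmf \<Rightarrow> nat pmf \<Rightarrow> real" where
  "theta3 q p00 p10 =
     (let th1 = theta1 q p00 p10;
          var = q 0 0 * mom2_pmf p00 + (1 - q 0 0) * mom2_pmf p10 - th1^2
      in var / th1^2 - 1 / th1)"

end

theory Submission
  imports Defs
begin

text \<open>
  The trajectory is generated step by step: from the last hidden state X_{t-1} one draws X'_t,
  then X_t, then Y_t. Photons are emitted only when X'_t = 0, and row 0 of M = M^s M^l is q00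
  times row 0 of M^l, so P(X'_t = 0) = P(X_t = 0) / q00 = (M^t nu)_0 / q00. Hence
  E Y_t = theta1 (M^t nu)_0 / q00, and similarly for E Y_t^2. For t' < t, conditioning on the
  state reached right after the emission at time t' (state 0 with probability q00, emitting with
  the mean of p00; otherwise a state emitting with the mean of p10) expresses E[Y_t Y_t'] through
  (M^d)_00 and (M^(d+1))_00 with d = t - t'. Independent copies multiply means and covariances
  by m, and the diagonalisation M = V Lambda V^-1 turns the matrix powers into the eigenvalue
  sums defining mu and mu0.
\<close>

section \<open>Discrete distributions and sums of independent copies\<close>

lemma pmf_bind_map_inj:
  assumes inj: "\<And>u v u' v'. g u v = g u' v' \<Longrightarrow> u = u' \<and> v = v'"
  shows "pmf (p \<bind> (\<lambda>u. map_pmf (g u) (f u))) (g u0 v0) = pmf p u0 * pmf (f u0) v0"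
proof -
  have "ennreal (pmf (map_pmf (g u) (f u)) (g u0 v0)) = ennreal (pmf (f u0) v0) * indicator {u0} u" for u
  proof (cases "u = u0")
    case True
    have "inj (g u0)" using inj by (auto intro: injI)
    then show ?thesis using True by (simp add: pmf_map_inj')
  next
    case False
    then have "g u0 v0 \<notin> set_pmf (map_pmf (g u) (f u))" using inj by auto
    then show ?thesis using False by (simp add: pmf_eq_0_set_pmf)
  qed
  then have "ennreal (pmf (p \<bind> (\<lambda>u. map_pmf (g u) (f u))) (g u0 v0))
      = ennreal (pmf (f u0) v0) * ennreal (pmf p u0)"
    by (simp add: ennreal_pmf_bind emeasure_pmf_single)
  then show ?thesis by (simp add: ennreal_mult'[symmetric] mult.commute)
qed

lemma pmf_embed_pmf_atMost:
  fixes f :: "nat \<Rightarrow> real"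
  assumes "\<And>x. x \<le> r \<Longrightarrow> 0 \<le> f x" "(\<Sum>x\<le>r. f x) = 1"
  shows "pmf (embed_pmf (\<lambda>x. if x \<le> r then f x else 0)) x = (if x \<le> r then f x else 0)"
proof (rule pmf_embed_pmf)
  have "(\<integral>\<^sup>+x. ennreal (if x \<le> r then f x else 0) \<partial>count_space UNIV) = (\<Sum>x\<le>r. ennreal (f x))"
    by (subst nn_integral_count_space'[where A="{..r}"]) auto
  also have "\<dots> = ennreal (\<Sum>x\<le>r. f x)" using assms by (intro sum_ennreal) auto
  also have "\<dots> = 1" using assms by simp
  finally show "(\<integral>\<^sup>+x. ennreal (if x \<le> r then f x else 0) \<partial>count_space UNIV) = 1" .
qed (use assms in auto)

lemma pmf_cov_eq:
  fixes P :: "'a pmf" and X Y :: "'a \<Rightarrow> real"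
  assumes "integrable P X" "integrable P Y" "integrable P (\<lambda>\<omega>. X \<omega> * Y \<omega>)"
  shows "pmf_cov P X Y = measure_pmf.expectation P (\<lambda>\<omega>. X \<omega> * Y \<omega>)
           - measure_pmf.expectation P X * measure_pmf.expectation P Y"
proof -
  define a b where "a = measure_pmf.expectation P X" and "b = measure_pmf.expectation P Y"
  have "pmf_cov P X Y = measure_pmf.expectation P (\<lambda>\<omega>. X \<omega> * Y \<omega> - b * X \<omega> - a * Y \<omega> + a * b)"
    unfolding pmf_cov_def a_def[symmetric] b_def[symmetric]
    by (rule arg_cong[where f="integral\<^sup>L P"]) (auto simp: algebra_simps)
  also have "\<dots> = measure_pmf.expectation P (\<lambda>\<omega>. X \<omega> * Y \<omega>) - b * a - a * b + a * b"
    using assms by (simp add: a_def b_def)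
  finally show ?thesis by (simp add: a_def b_def)
qed

lemma integrable_expectation_of_nn_integral:
  fixes P :: "'a pmf" and f :: "'a \<Rightarrow> real"
  assumes "\<And>x. 0 \<le> f x" "0 \<le> c" "(\<integral>\<^sup>+x. ennreal (f x) \<partial>P) = ennreal c"
  shows "integrable P f" "measure_pmf.expectation P f = c"
  using has_bochner_integral_nn_integral[of f P c] assms by (auto simp: has_bochner_integral_iff)

lemma expectation_Pi_pmf_component:
  fixes P :: "'a \<Rightarrow> 'b pmf" and f :: "'b \<Rightarrow> real"
  assumes "finite A" "k \<in> A"
  shows "measure_pmf.expectation (Pi_pmf A d P) (\<lambda>\<omega>. f (\<omega> k)) = measure_pmf.expectation (P k) f"
    and "integrable (P k) f \<Longrightarrow> integrable (Pi_pmf A d P) (\<lambda>\<omega>. f (\<omega> k))"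
  using integral_map_pmf[of "\<lambda>\<omega>. \<omega> k" "Pi_pmf A d P" f]
    integrable_map_pmf_eq[of "\<lambda>\<omega>. \<omega> k" "Pi_pmf A d P" f]
  by (simp_all add: Pi_pmf_component assms)

lemma expectation_Pi_pmf_two_components:
  fixes P :: "'a \<Rightarrow> 'b pmf" and f g :: "'b \<Rightarrow> real"
  assumes A: "finite A" "k \<in> A" "l \<in> A" "k \<noteq> l"
    and int: "integrable (P k) f" "integrable (P l) g"
    and nonneg: "\<And>x. 0 \<le> f x" "\<And>x. 0 \<le> g x"
  shows "measure_pmf.expectation (Pi_pmf A d P) (\<lambda>\<omega>. f (\<omega> k) * g (\<omega> l))
           = measure_pmf.expectation (P k) f * measure_pmf.expectation (P l) g"
    and "integrable (Pi_pmf A d P) (\<lambda>\<omega>. f (\<omega> k) * g (\<omega> l))"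
proof -
  define h where "h i = (if i = k then f else if i = l then g else (\<lambda>_. 1))" for i
  have prod_two: "(\<Prod>i\<in>A. H i) = H k * H l" if "\<And>i. i \<noteq> k \<Longrightarrow> i \<noteq> l \<Longrightarrow> H i = 1"
    for H :: "'a \<Rightarrow> real"
  proof -
    have "(\<Prod>i\<in>A. H i) = (\<Prod>i\<in>{k, l}. H i)"
      using A that by (intro prod.mono_neutral_right) auto
    then show ?thesis using A by simp
  qed
  have h_prod: "(\<lambda>\<omega>. \<Prod>i\<in>A. h i (\<omega> i)) = (\<lambda>\<omega>. f (\<omega> k) * g (\<omega> l))"
    using A by (intro ext, subst prod_two) (auto simp: h_def)
  have h_int: "integrable (P i) (h i)" if "i \<in> A" for i
    using int by (simp add: h_def)
  show "measure_pmf.expectation (Pi_pmf A d P) (\<lambda>\<omega>. f (\<omega> k) * g (\<omega> l))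
      = measure_pmf.expectation (P k) f * measure_pmf.expectation (P l) g"
    using expectation_prod_Pi_pmf[of A P h d] A h_int nonneg
    by (simp add: h_prod prod_two h_def)
  show "integrable (Pi_pmf A d P) (\<lambda>\<omega>. f (\<omega> k) * g (\<omega> l))"
    using integrable_prod_Pi_pmf[of A P h d] A h_int by (simp add: h_prod)
qed

lemma expectation_sum_iid:
  fixes P :: "'a pmf" and f :: "'a \<Rightarrow> real"
  assumes "integrable P f"
  shows "measure_pmf.expectation (Pi_pmf {..<m} d (\<lambda>_. P)) (\<lambda>\<omega>. \<Sum>k<m. f (\<omega> k))
           = real m * measure_pmf.expectation P f"
  using assms by (simp add: Bochner_Integration.integral_sum expectation_Pi_pmf_component)

lemma expectation_Pi_pmf_pair_iid:
  fixes P :: "'a pmf" and f g :: "'a \<Rightarrow> real" and m :: nat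
  assumes "k < m" "l < m"
    and int: "integrable P f" "integrable P g" "integrable P (\<lambda>x. f x * g x)"
    and nonneg: "\<And>x. 0 \<le> f x" "\<And>x. 0 \<le> g x"
  shows "integrable (Pi_pmf {..<m} d (\<lambda>_. P)) (\<lambda>\<omega>. f (\<omega> k) * g (\<omega> l))
    \<and> measure_pmf.expectation (Pi_pmf {..<m} d (\<lambda>_. P)) (\<lambda>\<omega>. f (\<omega> k) * g (\<omega> l))
      = (if k = l then measure_pmf.expectation P (\<lambda>x. f x * g x)
         else measure_pmf.expectation P f * measure_pmf.expectation P g)"
proof (cases "k = l")
  case True
  then show ?thesis
    using \<open>l < m\<close> int expectation_Pi_pmf_component[where A="{..<m}" and P="\<lambda>_. P" and f="\<lambda>x. f x * g x"]
    by simp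
next
  case False
  then show ?thesis
    using assms expectation_Pi_pmf_two_components[where A="{..<m}" and P="\<lambda>_. P" and f=f and g=g]
    by simp
qed

lemma expectation_mult_sums_iid:
  fixes P :: "'a pmf" and f g :: "'a \<Rightarrow> real" and m :: nat and d :: 'a
  assumes int: "integrable P f" "integrable P g" "integrable P (\<lambda>x. f x * g x)"
    and nonneg: "\<And>x. 0 \<le> f x" "\<And>x. 0 \<le> g x"
  defines "Q \<equiv> Pi_pmf {..<m} d (\<lambda>_. P)"
  shows "integrable Q (\<lambda>\<omega>. (\<Sum>k<m. f (\<omega> k)) * (\<Sum>l<m. g (\<omega> l)))"
    and "measure_pmf.expectation Q (\<lambda>\<omega>. (\<Sum>k<m. f (\<omega> k)) * (\<Sum>l<m. g (\<omega> l)))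
      = real m * measure_pmf.expectation P (\<lambda>x. f x * g x)
        + real m * (real m - 1) * (measure_pmf.expectation P f * measure_pmf.expectation P g)"
proof -
  note pair = expectation_Pi_pmf_pair_iid[where m=m and d=d, OF _ _ assms(1-5), folded Q_def]
  show "integrable Q (\<lambda>\<omega>. (\<Sum>k<m. f (\<omega> k)) * (\<Sum>l<m. g (\<omega> l)))"
    unfolding sum_product by (auto intro!: integrable_sum pair[THEN conjunct1])
  define a b where "a = measure_pmf.expectation P (\<lambda>x. f x * g x)"
    and "b = measure_pmf.expectation P f * measure_pmf.expectation P g"
  have "measure_pmf.expectation Q (\<lambda>\<omega>. (\<Sum>k<m. f (\<omega> k)) * (\<Sum>l<m. g (\<omega> l)))
      = (\<Sum>k<m. \<Sum>l<m. measure_pmf.expectation Q (\<lambda>\<omega>. f (\<omega> k) * g (\<omega> l)))"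
    unfolding sum_product
    by (subst Bochner_Integration.integral_sum)
       (auto intro!: integrable_sum pair[THEN conjunct1] sum.cong Bochner_Integration.integral_sum)
  also have "\<dots> = (\<Sum>k<m. \<Sum>l<m. b + (if k = l then a - b else 0))"
    using pair by (intro sum.cong) (auto simp: a_def b_def)
  also have "\<dots> = real m * a + real m * (real m - 1) * b"
    by (simp add: sum.distrib algebra_simps)
  finally show "measure_pmf.expectation Q (\<lambda>\<omega>. (\<Sum>k<m. f (\<omega> k)) * (\<Sum>l<m. g (\<omega> l)))
      = real m * measure_pmf.expectation P (\<lambda>x. f x * g x)
        + real m * (real m - 1) * (measure_pmf.expectation P f * measure_pmf.expectation P g)"
    by (simp add: a_def b_def)
qed

lemma pmf_cov_sum_iid:
  fixes P :: "'a pmf" and f g :: "'a \<Rightarrow> real"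
  assumes int: "integrable P f" "integrable P g" "integrable P (\<lambda>x. f x * g x)"
    and nonneg: "\<And>x. 0 \<le> f x" "\<And>x. 0 \<le> g x"
  shows "pmf_cov (Pi_pmf {..<m} d (\<lambda>_. P)) (\<lambda>\<omega>. \<Sum>k<m. f (\<omega> k)) (\<lambda>\<omega>. \<Sum>k<m. g (\<omega> k))
           = real m * pmf_cov P f g"
proof -
  have "integrable (Pi_pmf {..<m} d (\<lambda>_. P)) (\<lambda>\<omega>. \<Sum>k<m. f (\<omega> k))"
    "integrable (Pi_pmf {..<m} d (\<lambda>_. P)) (\<lambda>\<omega>. \<Sum>k<m. g (\<omega> k))"
    using int by (auto intro!: integrable_sum expectation_Pi_pmf_component(2))
  then show ?thesis
    using int expectation_mult_sums_iid[OF assms, where m=m and d=d]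
    by (simp add: pmf_cov_eq expectation_sum_iid algebra_simps)
qed

lemma sum_sum_ennreal:
  assumes "\<And>a b. a \<le> r \<Longrightarrow> b \<le> r \<Longrightarrow> 0 \<le> f a b"
  shows "(\<Sum>a\<le>(r::nat). \<Sum>b\<le>r. ennreal (f a b)) = ennreal (\<Sum>a\<le>r. \<Sum>b\<le>r. f a b)"
proof -
  have "(\<Sum>a\<le>r. \<Sum>b\<le>r. ennreal (f a b)) = (\<Sum>a\<le>r. ennreal (\<Sum>b\<le>r. f a b))"
    using assms by (intro sum.cong refl sum_ennreal) auto
  also have "\<dots> = ennreal (\<Sum>a\<le>r. \<Sum>b\<le>r. f a b)"
    using assms by (intro sum_ennreal sum_nonneg) auto
  finally show ?thesis .
qed

section \<open>Emission moments and parameter identities\<close>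

lemma square_le_exp: "0 \<le> (x::real) \<Longrightarrow> x\<^sup>2 \<le> 4 * exp x"
proof -
  assume x: "0 \<le> x"
  have "x / 2 \<le> exp (x / 2)" using exp_ge_add_one_self[of "x / 2"] by linarith
  then have "(x / 2)\<^sup>2 \<le> (exp (x / 2))\<^sup>2" using x by (intro power_mono) auto
  also have "(exp (x / 2))\<^sup>2 = exp x" by (simp add: power2_eq_square flip: exp_add)
  finally show ?thesis by (simp add: power2_eq_square field_simps)
qed

lemma integrable_square_of_mgf:
  fixes p :: "nat pmf"
  assumes "\<exists>\<epsilon>>0. \<forall>s. \<bar>s\<bar> < \<epsilon> \<longrightarrow> integrable (measure_pmf p) (\<lambda>n. exp (s * real n))"
  shows "integrable p (\<lambda>n. (real n)\<^sup>2)"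
proof -
  obtain s where s: "0 < s" "integrable p (\<lambda>n. exp (s * real n))"
    using assms by (metis abs_of_pos field_sum_of_halves half_gt_zero less_add_same_cancel1)
  show ?thesis
  proof (rule Bochner_Integration.integrable_bound)
    show "integrable p (\<lambda>n. 4 / s\<^sup>2 * exp (s * real n))" using s by simp
    show "AE n in measure_pmf p. norm ((real n)\<^sup>2) \<le> norm (4 / s\<^sup>2 * exp (s * real n))"
    proof (rule AE_pmfI)
      fix n :: nat
      have "s\<^sup>2 * (real n)\<^sup>2 \<le> 4 * exp (s * real n)"
        using square_le_exp[of "s * real n"] s by (simp add: power_mult_distrib)
      then show "norm ((real n)\<^sup>2) \<le> norm (4 / s\<^sup>2 * exp (s * real n))"
        using s by (simp add: field_simps)
    qed
  qed simp
qed

lemma integrable_real_of_square: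
  fixes p :: "nat pmf"
  assumes "integrable p (\<lambda>n. (real n)\<^sup>2)"
  shows "integrable p real"
proof (rule Bochner_Integration.integrable_bound[OF assms])
  show "AE n in measure_pmf p. norm (real n) \<le> norm ((real n)\<^sup>2)"
    using le_square by (intro AE_pmfI) (simp add: power2_eq_square flip: of_nat_mult)
qed simp

lemma theta3_plus_one:
  assumes "theta1 q p00 p10 \<noteq> 0"
  shows "theta3 q p00 p10 + 1
    = (q 0 0 * mom2_pmf p00 + (1 - q 0 0) * mom2_pmf p10) / (theta1 q p00 p10)\<^sup>2 - 1 / theta1 q p00 p10"
  using assms by (simp add: theta3_def Let_def field_simps power2_eq_square)

lemma theta2_coefficients:
  assumes "theta1 q p00 p10 \<noteq> 0" "q 0 0 \<noteq> 1"
  shows "(1 - theta2 q p00 p10) / (1 - q 0 0) = mean_pmf p10 / theta1 q p00 p10"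
    and "theta2 q p00 p10 - q 0 0 * (1 - theta2 q p00 p10) / (1 - q 0 0)
           = q 0 0 * (mean_pmf p00 - mean_pmf p10) / theta1 q p00 p10"
proof -
  define \<theta> where "\<theta> = theta1 q p00 p10"
  have "\<theta> = q 0 0 * mean_pmf p00 + (1 - q 0 0) * mean_pmf p10" by (simp add: \<theta>_def theta1_def)
  then have one_minus: "1 - theta2 q p00 p10 = (1 - q 0 0) * mean_pmf p10 / \<theta>"
    using assms by (simp add: theta2_def \<theta>_def[symmetric] field_simps)
  then show "(1 - theta2 q p00 p10) / (1 - q 0 0) = mean_pmf p10 / theta1 q p00 p10"
    using assms by (simp add: \<theta>_def)
  show "theta2 q p00 p10 - q 0 0 * (1 - theta2 q p00 p10) / (1 - q 0 0)
      = q 0 0 * (mean_pmf p00 - mean_pmf p10) / theta1 q p00 p10"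
    using assms unfolding one_minus by (simp add: theta2_def \<theta>_def field_simps)
qed

lemma mean_coefficients_split:
  fixes V Vi :: "nat \<Rightarrow> nat \<Rightarrow> complex" and lam \<alpha> \<alpha>0 \<alpha>1 :: "nat \<Rightarrow> complex"
    and \<nu> :: "nat \<Rightarrow> real" and c :: complex
  assumes "\<nu> 0 < 1" "1 \<le> r" "V 0 r = 0"
    and \<alpha>_def: "\<And>x. \<alpha> x = V 0 x * lam x / c * (\<Sum>z\<le>r. Vi x z * complex_of_real (\<nu> z))"
    and \<alpha>0_def: "\<And>x. \<alpha>0 x = lam x / c * V 0 x * Vi x 0"
    and \<alpha>1_def: "\<And>x. \<alpha>1 x = lam x / c * V 0 x
                   * (\<Sum>z\<le>r. Vi x z * complex_of_real ((if z = 0 then 0 else \<nu> z) / (1 - \<nu> 0)))"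
  shows "(\<Sum>x\<le>r. \<alpha> x * lam x ^ k)
    = (\<Sum>x\<le>r - 1. (complex_of_real (\<nu> 0) * \<alpha>0 x + complex_of_real (1 - \<nu> 0) * \<alpha>1 x) * lam x ^ k)"
proof -
  have split: "complex_of_real (\<nu> 0) * \<alpha>0 x + complex_of_real (1 - \<nu> 0) * \<alpha>1 x = \<alpha> x" for x
  proof -
    define S' where "S' = (\<Sum>z\<le>r. Vi x z * complex_of_real (if z = 0 then 0 else \<nu> z))"
    have "(\<Sum>z\<le>r. Vi x z * complex_of_real (\<nu> z))
        = (\<Sum>z\<le>r. (if z = 0 then Vi x 0 * complex_of_real (\<nu> 0) else 0)
                    + Vi x z * complex_of_real (if z = 0 then 0 else \<nu> z))"
      by (intro sum.cong) auto
    then have \<nu>_split: "(\<Sum>z\<le>r. Vi x z * complex_of_real (\<nu> z)) = Vi x 0 * complex_of_real (\<nu> 0) + S'"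
      by (simp add: sum.distrib S'_def)
    have "\<alpha>1 x = lam x / c * V 0 x * (S' / complex_of_real (1 - \<nu> 0))"
      unfolding \<alpha>1_def S'_def by (simp add: sum_divide_distrib)
    moreover have "complex_of_real (1 - \<nu> 0) \<noteq> 0" using \<open>\<nu> 0 < 1\<close> by simp
    ultimately have "complex_of_real (1 - \<nu> 0) * \<alpha>1 x = lam x / c * V 0 x * S'"
      by simp
    then show ?thesis unfolding \<alpha>0_def \<alpha>_def \<nu>_split by (simp add: algebra_simps)
  qed
  have "\<alpha> r = 0" using assms by (simp add: \<alpha>_def)
  then have "(\<Sum>x\<le>r. \<alpha> x * lam x ^ k) = (\<Sum>x\<le>r - 1. \<alpha> x * lam x ^ k)"
    using \<open>1 \<le> r\<close> by (cases r) (simp_all add: sum.atMost_Suc)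
  then show ?thesis unfolding split .
qed

section \<open>The path measure as a sequential construction\<close>

locale htmm_model =
  fixes r :: nat and q :: "nat \<Rightarrow> nat \<Rightarrow> real" and \<nu> :: "nat \<Rightarrow> real" and p00 p10 :: "nat pmf"
  assumes q_range: "\<And>x z. x \<le> r \<Longrightarrow> z \<le> r - 1 \<Longrightarrow> 0 \<le> q x z \<and> q x z \<le> 1"
    and q_stoch: "\<And>z. z \<le> r - 1 \<Longrightarrow> (\<Sum>x\<le>r. q x z) = 1"
    and \<nu>_nonneg: "\<And>x. x \<le> r \<Longrightarrow> 0 \<le> \<nu> x"
    and \<nu>_sum: "(\<Sum>x\<le>r. \<nu> x) = 1"
begin

lemma Mell_nonneg: "a \<le> r \<Longrightarrow> z \<le> r \<Longrightarrow> 0 \<le> Mell r q a z"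
  using q_range[of a z] by (auto simp: Mell_def)

lemma Ms_nonneg: "b \<le> r \<Longrightarrow> 0 \<le> Ms q b a"
  using q_range[of b 0] by (auto simp: Ms_def)

lemma Mell_col_sum: "z \<le> r \<Longrightarrow> (\<Sum>a\<le>r. Mell r q a z) = 1"
proof -
  assume z: "z \<le> r"
  consider "z = 0" | "z = r" "z \<noteq> 0" | "z \<noteq> 0" "z \<noteq> r" by blast
  then show ?thesis
  proof cases
    case 3
    then have "z \<le> r - 1" using z by simp
    then show ?thesis using q_stoch[of z] 3 by (simp add: Mell_def)
  qed (auto simp: Mell_def)
qed

lemma Ms_col_sum: "a \<le> r \<Longrightarrow> (\<Sum>b\<le>r. Ms q b a) = 1"
  using q_stoch[of 0] by (cases "a = 0") (auto simp: Ms_def)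

lemma Mfull_nonneg: "x \<le> r \<Longrightarrow> z \<le> r \<Longrightarrow> 0 \<le> Mfull r q x z"
  unfolding Mfull_def by (auto intro!: sum_nonneg mult_nonneg_nonneg Ms_nonneg Mell_nonneg)

lemma Mfull_col_sum: "z \<le> r \<Longrightarrow> (\<Sum>x\<le>r. Mfull r q x z) = 1"
proof -
  assume z: "z \<le> r"
  have "(\<Sum>x\<le>r. Mfull r q x z) = (\<Sum>y\<le>r. (\<Sum>x\<le>r. Ms q x y) * Mell r q y z)"
    unfolding Mfull_def by (subst sum.swap) (simp add: sum_distrib_right)
  then show ?thesis using Mell_col_sum[OF z] by (simp add: Ms_col_sum)
qed

lemma Mfull_row0: "Mfull r q 0 z = q 0 0 * Mell r q 0 z"
  unfolding Mfull_def Ms_def by (simp add: if_distrib if_distribR cong: if_cong)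

lemma Mfull_col0: "Mfull r q y 0 = q y 0"
proof -
  have "Mfull r q y 0 = (\<Sum>w\<le>r. if w = 0 then Ms q y 0 else 0)"
    unfolding Mfull_def Mell_def by (intro sum.cong) auto
  then show ?thesis by (simp add: Ms_def)
qed

lemma sum_q_col0_weighted:
  "(\<Sum>b\<le>r. q b 0 * (if b = 0 then A else B) * f b)
     = q 0 0 * A * f 0 + B * ((\<Sum>b\<le>r. q b 0 * f b) - q 0 0 * f 0)"
proof -
  have "(\<Sum>b\<le>r. q b 0 * (if b = 0 then A else B) * f b)
      = (\<Sum>b\<le>r. B * (q b 0 * f b) + (if b = 0 then q 0 0 * (A - B) * f 0 else 0))"
    by (intro sum.cong) (auto simp: algebra_simps)
  then show ?thesis by (simp add: sum.distrib sum_distrib_left algebra_simps)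
qed

lemma sum_q_col0_split: "(\<Sum>b\<le>r. q b 0 * (if b = 0 then A else B)) = q 0 0 * A + (1 - q 0 0) * B"
  using sum_q_col0_weighted[where f="\<lambda>_. 1"] q_stoch[of 0] by (simp add: algebra_simps)

definition init_pmf :: "nat pmf" where
  "init_pmf = embed_pmf (\<lambda>x. if x \<le> r then \<nu> x else 0)"

definition ell_pmf :: "nat \<Rightarrow> nat pmf" where
  "ell_pmf z = embed_pmf (\<lambda>a. if a \<le> r then Mell r q a z else 0)"

definition s_pmf :: "nat \<Rightarrow> nat pmf" where
  "s_pmf a = embed_pmf (\<lambda>b. if b \<le> r then Ms q b a else 0)"

text \<open>The law of \<open>(X'_t, X_t, Y_t)\<close> given \<open>X_{t-1} = z\<close>.\<close>

definition step_pmf :: "nat \<Rightarrow> (nat \<times> nat \<times> nat) pmf" where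
  "step_pmf z = ell_pmf z \<bind>
     (\<lambda>a. map_pmf (Pair a) (s_pmf a \<bind> (\<lambda>b. map_pmf (Pair b) (emis p00 p10 b a))))"

definition extend :: "path \<Rightarrow> nat \<times> nat \<times> nat \<Rightarrow> path" where
  "extend \<omega> e = (case \<omega> of (x0, xs', xs, ys) \<Rightarrow> case e of (a, b, y) \<Rightarrow> (x0, xs' @ [a], xs @ [b], ys @ [y]))"

definition last_state :: "path \<Rightarrow> nat" where
  "last_state \<omega> = (case \<omega> of (x0, xs', xs, ys) \<Rightarrow> last (x0 # xs))"

primrec path_pmf :: "nat \<Rightarrow> path pmf" where
  "path_pmf 0 = map_pmf (\<lambda>x. (x, [], [], [])) init_pmf"
| "path_pmf (Suc n) = path_pmf n \<bind> (\<lambda>\<omega>. map_pmf (extend \<omega>) (step_pmf (last_state \<omega>)))"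

lemma pmf_init_pmf: "pmf init_pmf x = (if x \<le> r then \<nu> x else 0)"
  unfolding init_pmf_def using \<nu>_nonneg \<nu>_sum by (rule pmf_embed_pmf_atMost)

lemma pmf_ell_pmf: "z \<le> r \<Longrightarrow> pmf (ell_pmf z) a = (if a \<le> r then Mell r q a z else 0)"
  unfolding ell_pmf_def by (rule pmf_embed_pmf_atMost) (auto simp: Mell_nonneg Mell_col_sum)

lemma pmf_s_pmf: "a \<le> r \<Longrightarrow> pmf (s_pmf a) b = (if b \<le> r then Ms q b a else 0)"
  unfolding s_pmf_def by (rule pmf_embed_pmf_atMost) (auto simp: Ms_nonneg Ms_col_sum)

lemma pmf_step_pmf: "z \<le> r \<Longrightarrow> pmf (step_pmf z) (a,b,y) =
   (if a \<le> r \<and> b \<le> r then Mell r q a z * Ms q b a * pmf (emis p00 p10 b a) y else 0)"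
  unfolding step_pmf_def
  by (subst pmf_bind_map_inj, simp, subst pmf_bind_map_inj, simp) (auto simp: pmf_ell_pmf pmf_s_pmf)

lemma extend_inj: "extend w e = extend w' e' \<Longrightarrow> w = w' \<and> e = e'"
  by (cases w; cases w'; cases e; cases e') (auto simp: extend_def)

lemma pmf_path_pmf_Suc_extend: "pmf (path_pmf (Suc n)) (extend w e) = pmf (path_pmf n) w * pmf (step_pmf (last_state w)) e"
  unfolding path_pmf.simps by (rule pmf_bind_map_inj, rule extend_inj)

lemma htmm_dens_Suc_extend:
  "htmm_dens r (Suc n) q \<nu> p00 p10 (extend w e) = htmm_dens r n q \<nu> p00 p10 w * pmf (step_pmf (last_state w)) e"
proof -
  obtain x0 l1 l2 l3 where w: "w = (x0, l1, l2, l3)" by (cases w) auto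
  obtain a b y where e: "e = (a, b, y)" by (cases e) auto
  show ?thesis
  proof (cases "length l1 = n \<and> length l2 = n \<and> length l3 = n \<and> x0 \<le> r \<and> set l1 \<subseteq> {..r} \<and> set l2 \<subseteq> {..r}")
    case False
    then show ?thesis by (auto simp: w e extend_def htmm_dens_def)
  next
    case C: True
    define z where "z = last (x0 # l2)"
    have z: "z \<le> r" using C unfolding z_def
      by (metis atMost_iff last_ConsL last_ConsR last_in_set subsetD)
    have z_nth: "z = (if Suc n = 1 then x0 else l2 ! (n - 1))"
      using C by (auto simp: z_def last_conv_nth)
    define F where "F L1 L2 L3 t = Mell r q (L1 ! (t - 1)) (if t = 1 then x0 else L2 ! (t - 2))
      * Ms q (L2 ! (t - 1)) (L1 ! (t - 1)) * pmf (emis p00 p10 (L2 ! (t - 1)) (L1 ! (t - 1))) (L3 ! (t - 1))"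
      for L1 L2 L3 t
    have prod_eq: "prod (F (l1 @ [a]) (l2 @ [b]) (l3 @ [y])) {Suc 0..n} = prod (F l1 l2 l3) {Suc 0..n}"
      using C by (intro prod.cong) (auto simp: F_def nth_append)
    have last_factor: "F (l1 @ [a]) (l2 @ [b]) (l3 @ [y]) (Suc n) = Mell r q a z * Ms q b a * pmf (emis p00 p10 b a) y"
      unfolding F_def z_nth using C by (auto simp: nth_append)
    have step: "pmf (step_pmf (last_state w)) e
        = (if a \<le> r \<and> b \<le> r then Mell r q a z * Ms q b a * pmf (emis p00 p10 b a) y else 0)"
      using pmf_step_pmf[OF z] by (simp add: w e last_state_def z_def)
    have "htmm_dens r (Suc n) q \<nu> p00 p10 (extend w e)
        = (if a \<le> r \<and> b \<le> r then \<nu> x0 * prod (F (l1 @ [a]) (l2 @ [b]) (l3 @ [y])) {1..Suc n} else 0)"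
      using C by (simp add: w e extend_def htmm_dens_def F_def)
    also have "\<dots> = (if a \<le> r \<and> b \<le> r
        then \<nu> x0 * prod (F l1 l2 l3) {1..n} * (Mell r q a z * Ms q b a * pmf (emis p00 p10 b a) y) else 0)"
      by (simp add: prod.cl_ivl_Suc prod_eq last_factor)
    also have "\<dots> = htmm_dens r n q \<nu> p00 p10 w * pmf (step_pmf (last_state w)) e"
      unfolding step using C by (simp add: w htmm_dens_def F_def)
    finally show ?thesis .
  qed
qed

lemma pmf_path_pmf: "pmf (path_pmf n) w = htmm_dens r n q \<nu> p00 p10 w"
proof (induction n arbitrary: w)
  case 0
  obtain x0 l1 l2 l3 where w: "w = (x0,l1,l2,l3)" by (cases w) auto
  show ?case
  proof (cases "l1 = [] \<and> l2 = [] \<and> l3 = []")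
    case True
    have "inj (\<lambda>x::nat. (x, [] :: nat list, [] :: nat list, [] :: nat list))" by (auto intro: injI)
    from pmf_map_inj'[OF this, of init_pmf x0]
    show ?thesis using True by (simp add: w pmf_init_pmf htmm_dens_def)
  next
    case False
    then have "pmf (path_pmf 0) w = 0" by (auto simp: w pmf_eq_0_set_pmf)
    then show ?thesis using False by (auto simp: w htmm_dens_def)
  qed
next
  case (Suc n)
  obtain x0 l1 l2 l3 where w: "w = (x0,l1,l2,l3)" by (cases w) auto
  show ?case
  proof (cases "l1 \<noteq> [] \<and> l2 \<noteq> [] \<and> l3 \<noteq> []")
    case True
    define w' where "w' = (x0, butlast l1, butlast l2, butlast l3)"
    define e' where "e' = (last l1, last l2, last l3)"
    have weq: "w = extend w' e'"
      using True by (simp add: w w'_def e'_def extend_def)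
    have "pmf (path_pmf (Suc n)) w = pmf (path_pmf n) w' * pmf (step_pmf (last_state w')) e'"
      unfolding weq by (rule pmf_path_pmf_Suc_extend)
    also have "\<dots> = htmm_dens r (Suc n) q \<nu> p00 p10 w"
      unfolding weq htmm_dens_Suc_extend Suc.IH ..
    finally show ?thesis .
  next
    case False
    have "pmf (path_pmf (Suc n)) w = 0" unfolding path_pmf.simps
      by (subst pmf_eq_0_set_pmf) (use False in \<open>auto simp: w extend_def split: prod.splits\<close>)
    then show ?thesis using False by (auto simp: w htmm_dens_def)
  qed
qed

lemma htmm_eq_path_pmf: "htmm r n q \<nu> p00 p10 = path_pmf n"
proof (rule pmf_eqI)
  fix i
  have nn: "\<And>x. 0 \<le> htmm_dens r n q \<nu> p00 p10 x" using pmf_path_pmf pmf_nonneg by metis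
  have "(\<integral>\<^sup>+x. ennreal (htmm_dens r n q \<nu> p00 p10 x) \<partial>count_space UNIV) = 1"
    by (simp add: pmf_path_pmf[symmetric] nn_integral_pmf)
  then show "pmf (htmm r n q \<nu> p00 p10) i = pmf (path_pmf n) i"
    unfolding htmm_def using nn by (simp add: pmf_embed_pmf pmf_path_pmf)
qed

lemma path_pmf_supportD: "w \<in> set_pmf (path_pmf n) \<Longrightarrow> length (snd (snd (snd w))) = n \<and> last_state w \<le> r"
proof -
  assume "w \<in> set_pmf (path_pmf n)"
  then have d: "htmm_dens r n q \<nu> p00 p10 w \<noteq> 0" by (simp add: set_pmf_iff pmf_path_pmf)
  obtain x0 l1 l2 l3 where w: "w = (x0,l1,l2,l3)" by (cases w) auto
  have C: "length l3 = n \<and> x0 \<le> r \<and> set l2 \<subseteq> {..r}"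
    using d by (auto simp: w htmm_dens_def split: if_splits)
  then have "last (x0#l2) \<le> r"
    by (metis atMost_iff last_ConsL last_ConsR last_in_set subsetD)
  then show ?thesis using C by (simp add: w last_state_def)
qed

lemma Yobs_extend: "w \<in> set_pmf (path_pmf k) \<Longrightarrow> 1 \<le> i \<Longrightarrow> i \<le> k \<Longrightarrow> Yobs i (extend w e) = Yobs i w"
  using path_pmf_supportD[of w k]
  by (cases w; cases e) (auto simp: Yobs_def extend_def nth_append)

lemma Yobs_extend_last: "w \<in> set_pmf (path_pmf k) \<Longrightarrow> Yobs (Suc k) (extend w e) = snd (snd e)"
  using path_pmf_supportD[of w k]
  by (cases w; cases e) (auto simp: Yobs_def extend_def nth_append)

lemma last_state_extend: "last_state (extend w e) = fst (snd e)"
  by (cases w; cases e) (auto simp: last_state_def extend_def)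

lemma nn_integral_step_pmf:
  assumes z: "z \<le> r"
  shows "(\<integral>\<^sup>+e. H e \<partial>step_pmf z)
    = (\<Sum>a\<le>r. \<Sum>b\<le>r. ennreal (Mell r q a z * Ms q b a) * (\<integral>\<^sup>+y. H (a, b, y) \<partial>emis p00 p10 b a))"
proof -
  have ell: "(\<integral>\<^sup>+a. F a \<partial>ell_pmf z) = (\<Sum>a\<le>r. F a * ennreal (Mell r q a z))" for F
    using z by (subst nn_integral_measure_pmf_support[where A="{..r}"])
      (auto simp: pmf_ell_pmf set_pmf_iff split: if_splits)
  have s: "(\<integral>\<^sup>+b. F b \<partial>s_pmf a) = (\<Sum>b\<le>r. F b * ennreal (Ms q b a))" if "a \<le> r" for F a
    using that by (subst nn_integral_measure_pmf_support[where A="{..r}"])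
      (auto simp: pmf_s_pmf set_pmf_iff split: if_splits)
  have "(\<integral>\<^sup>+e. H e \<partial>step_pmf z)
      = (\<Sum>a\<le>r. (\<Sum>b\<le>r. (\<integral>\<^sup>+y. H (a, b, y) \<partial>emis p00 p10 b a) * ennreal (Ms q b a)) * ennreal (Mell r q a z))"
    by (simp add: step_pmf_def ell s)
  then show ?thesis
    using z by (simp add: sum_distrib_left ennreal_mult Mell_nonneg Ms_nonneg mult_ac)
qed

section \<open>Propagating expectations along the path\<close>

primrec Mpow :: "nat \<Rightarrow> nat \<Rightarrow> nat \<Rightarrow> real" where
  "Mpow 0 x z = (if x = z then 1 else 0)"
| "Mpow (Suc n) x z = (\<Sum>y\<le>r. Mpow n x y * Mfull r q y z)"

lemma Mpow_Suc_left: "x \<le> r \<Longrightarrow> z \<le> r \<Longrightarrow> Mpow (Suc n) x z = (\<Sum>y\<le>r. Mfull r q x y * Mpow n y z)"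
proof (induction n arbitrary: z)
  case 0
  then show ?case by (simp add: if_distrib if_distribR cong: if_cong)
next
  case (Suc n)
  have "Mpow (Suc (Suc n)) x z = (\<Sum>y\<le>r. \<Sum>w\<le>r. Mfull r q x w * Mpow n w y * Mfull r q y z)"
    using Suc by (simp add: sum_distrib_right)
  also have "\<dots> = (\<Sum>w\<le>r. Mfull r q x w * Mpow (Suc n) w z)"
    by (subst sum.swap) (simp add: sum_distrib_left mult_ac)
  finally show ?case .
qed

lemma Mpow_nonneg: "x \<le> r \<Longrightarrow> z \<le> r \<Longrightarrow> 0 \<le> Mpow n x z"
  by (induction n arbitrary: z) (auto intro!: sum_nonneg mult_nonneg_nonneg Mfull_nonneg)

lemma Mpow_col_sum: "z \<le> r \<Longrightarrow> (\<Sum>x\<le>r. Mpow n x z) = 1"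
proof (induction n arbitrary: z)
  case (Suc n)
  have "(\<Sum>x\<le>r. Mpow (Suc n) x z) = (\<Sum>y\<le>r. (\<Sum>x\<le>r. Mpow n x y) * Mfull r q y z)"
    by (simp add: sum_distrib_right) (rule sum.swap)
  then show ?case using Suc by (simp add: Mfull_col_sum)
qed simp

lemma Mpow_Suc_row0: "z \<le> r \<Longrightarrow> Mpow (Suc n) 0 z = q 0 0 * (\<Sum>x\<le>r. Mell r q 0 x * Mpow n x z)"
  by (simp add: Mpow_Suc_left Mfull_row0 sum_distrib_left mult_ac del: Mpow.simps)

lemma Mpow_Suc_col0: "Mpow (Suc n) x 0 = (\<Sum>b\<le>r. q b 0 * Mpow n x b)"
  by (simp add: Mfull_col0 mult.commute)

text \<open>\<open>state_prob n x\<close> is the probability of \<open>X_n = x\<close>.\<close>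

definition state_prob :: "nat \<Rightarrow> nat \<Rightarrow> real" where
  "state_prob n x = (\<Sum>z\<le>r. Mpow n x z * \<nu> z)"

lemma state_prob_nonneg: "x \<le> r \<Longrightarrow> 0 \<le> state_prob n x"
  unfolding state_prob_def by (auto intro!: sum_nonneg mult_nonneg_nonneg Mpow_nonneg \<nu>_nonneg)

lemma state_prob_Suc_0: "state_prob (Suc n) 0 = q 0 0 * (\<Sum>x\<le>r. Mell r q 0 x * state_prob n x)"
proof -
  have "state_prob (Suc n) 0 = (\<Sum>z\<le>r. \<Sum>x\<le>r. q 0 0 * Mell r q 0 x * Mpow n x z * \<nu> z)"
    unfolding state_prob_def
    by (intro sum.cong refl) (simp add: Mpow_Suc_row0 sum_distrib_left sum_distrib_right mult_ac del: Mpow.simps)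
  also have "\<dots> = q 0 0 * (\<Sum>x\<le>r. Mell r q 0 x * state_prob n x)"
    by (subst sum.swap) (simp add: state_prob_def sum_distrib_left mult_ac)
  finally show ?thesis .
qed

lemma nn_integral_step_pmf_state:
  assumes "z \<le> r" "\<And>b. b \<le> r \<Longrightarrow> 0 \<le> h b"
  shows "(\<integral>\<^sup>+e. ennreal (h (fst (snd e))) \<partial>step_pmf z) = ennreal (\<Sum>b\<le>r. Mfull r q b z * h b)"
proof -
  have "(\<integral>\<^sup>+e. ennreal (h (fst (snd e))) \<partial>step_pmf z)
      = ennreal (\<Sum>a\<le>r. \<Sum>b\<le>r. Mell r q a z * Ms q b a * h b)"
    using assms
    by (simp add: nn_integral_step_pmf measure_pmf.emeasure_space_1 Mell_nonneg Ms_nonneg mult.assoc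
        flip: ennreal_mult sum_sum_ennreal)
  also have "(\<Sum>a\<le>r. \<Sum>b\<le>r. Mell r q a z * Ms q b a * h b) = (\<Sum>b\<le>r. Mfull r q b z * h b)"
    unfolding Mfull_def by (subst sum.swap) (simp add: sum_distrib_left sum_distrib_right mult_ac)
  finally show ?thesis .
qed

text \<open>In the following lemmas, invariance of \<open>g\<close> under \<open>extend\<close> on the support of
  \<open>path_pmf k\<close> says that \<open>g\<close> only depends on the first \<open>n\<close> steps of the path.\<close>

lemma nn_integral_path_pmf_Suc_state:
  assumes g: "\<And>w e. w \<in> set_pmf (path_pmf n) \<Longrightarrow> g (extend w e) = g w"
    and h: "\<And>b. b \<le> r \<Longrightarrow> 0 \<le> h b"
  shows "(\<integral>\<^sup>+w. g w * ennreal (h (last_state w)) \<partial>path_pmf (Suc n))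
       = (\<integral>\<^sup>+w. g w * ennreal (\<Sum>b\<le>r. Mfull r q b (last_state w) * h b) \<partial>path_pmf n)"
proof -
  have "(\<integral>\<^sup>+w. g w * ennreal (h (last_state w)) \<partial>path_pmf (Suc n))
      = (\<integral>\<^sup>+w. g w * (\<integral>\<^sup>+e. ennreal (h (fst (snd e))) \<partial>step_pmf (last_state w)) \<partial>path_pmf n)"
    by (auto intro!: nn_integral_cong_AE AE_pmfI simp: g last_state_extend nn_integral_cmult)
  also have "\<dots> = (\<integral>\<^sup>+w. g w * ennreal (\<Sum>b\<le>r. Mfull r q b (last_state w) * h b) \<partial>path_pmf n)"
    using path_pmf_supportD h by (auto intro!: nn_integral_cong_AE AE_pmfI simp: nn_integral_step_pmf_state)
  finally show ?thesis .
qed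

lemma nn_integral_path_pmf_add_state:
  assumes g: "\<And>k w e. n \<le> k \<Longrightarrow> w \<in> set_pmf (path_pmf k) \<Longrightarrow> g (extend w e) = g w"
    and h: "\<And>b. b \<le> r \<Longrightarrow> 0 \<le> h b"
  shows "(\<integral>\<^sup>+w. g w * ennreal (h (last_state w)) \<partial>path_pmf (n + k))
       = (\<integral>\<^sup>+w. g w * ennreal (\<Sum>x\<le>r. h x * Mpow k x (last_state w)) \<partial>path_pmf n)"
  using h
proof (induction k arbitrary: h)
  case 0
  show ?case
    using path_pmf_supportD by (auto intro!: nn_integral_cong_AE AE_pmfI simp: if_distrib if_distribR cong: if_cong)
next
  case (Suc k)
  define h' where "h' y = (\<Sum>b\<le>r. Mfull r q b y * h b)" for y
  have h': "0 \<le> h' y" if "y \<le> r" for y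
    using that Suc.prems by (auto simp: h'_def intro!: sum_nonneg mult_nonneg_nonneg Mfull_nonneg)
  have "(\<integral>\<^sup>+w. g w * ennreal (h (last_state w)) \<partial>path_pmf (n + Suc k))
      = (\<integral>\<^sup>+w. g w * ennreal (h' (last_state w)) \<partial>path_pmf (n + k))"
    unfolding add_Suc_right h'_def
  proof (rule nn_integral_path_pmf_Suc_state)
    fix w e assume "w \<in> set_pmf (path_pmf (n + k))"
    then show "g (extend w e) = g w" by (rule g[rotated]) simp
  qed (rule Suc.prems)
  also have "\<dots> = (\<integral>\<^sup>+w. g w * ennreal (\<Sum>x\<le>r. h' x * Mpow k x (last_state w)) \<partial>path_pmf n)"
    using h' by (rule Suc.IH)
  also have "\<dots> = (\<integral>\<^sup>+w. g w * ennreal (\<Sum>x\<le>r. h x * Mpow (Suc k) x (last_state w)) \<partial>path_pmf n)"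
  proof (intro nn_integral_cong_AE AE_pmfI)
    fix w assume "w \<in> set_pmf (path_pmf n)"
    then have "last_state w \<le> r" by (simp add: path_pmf_supportD)
    then have "(\<Sum>x\<le>r. h x * Mpow (Suc k) x (last_state w))
        = (\<Sum>x\<le>r. \<Sum>y\<le>r. h x * Mfull r q x y * Mpow k y (last_state w))"
      by (intro sum.cong refl) (simp add: Mpow_Suc_left sum_distrib_left mult_ac del: Mpow.simps)
    also have "\<dots> = (\<Sum>y\<le>r. h' y * Mpow k y (last_state w))"
      by (subst sum.swap) (simp add: h'_def sum_distrib_left mult_ac)
    finally show "g w * ennreal (\<Sum>x\<le>r. h' x * Mpow k x (last_state w))
        = g w * ennreal (\<Sum>x\<le>r. h x * Mpow (Suc k) x (last_state w))" by simp
  qed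
  finally show ?case .
qed

lemma nn_integral_last_state:
  assumes "\<And>x. x \<le> r \<Longrightarrow> 0 \<le> h x"
  shows "(\<integral>\<^sup>+w. ennreal (h (last_state w)) \<partial>path_pmf n) = ennreal (\<Sum>x\<le>r. h x * state_prob n x)"
proof -
  have nonneg: "0 \<le> (\<Sum>x\<le>r. h x * Mpow n x z)" if "z \<le> r" for z
    using that assms by (auto intro!: sum_nonneg mult_nonneg_nonneg Mpow_nonneg)
  have "(\<integral>\<^sup>+w. ennreal (h (last_state w)) \<partial>path_pmf n)
      = (\<integral>\<^sup>+w. 1 * ennreal (h (last_state w)) \<partial>path_pmf (0 + n))" by simp
  also have "\<dots> = (\<integral>\<^sup>+z. ennreal (\<Sum>x\<le>r. h x * Mpow n x z) \<partial>init_pmf)"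
    using assms by (subst nn_integral_path_pmf_add_state) (auto simp: last_state_def)
  also have "\<dots> = (\<Sum>z\<le>r. ennreal ((\<Sum>x\<le>r. h x * Mpow n x z) * \<nu> z))"
    using nonneg \<nu>_nonneg
    by (subst nn_integral_measure_pmf_support[where A="{..r}"])
       (auto simp: pmf_init_pmf ennreal_mult set_pmf_iff split: if_splits)
  also have "\<dots> = ennreal (\<Sum>z\<le>r. (\<Sum>x\<le>r. h x * Mpow n x z) * \<nu> z)"
    using nonneg \<nu>_nonneg by (intro sum_ennreal) auto
  also have "(\<Sum>z\<le>r. (\<Sum>x\<le>r. h x * Mpow n x z) * \<nu> z) = (\<Sum>x\<le>r. h x * state_prob n x)"
    unfolding state_prob_def by (simp add: sum_distrib_left sum_distrib_right mult_ac) (rule sum.swap)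
  finally show ?thesis .
qed

lemma nn_integral_path_pmf_restrict:
  assumes g: "\<And>k w e. n \<le> k \<Longrightarrow> w \<in> set_pmf (path_pmf k) \<Longrightarrow> g (extend w e) = g w"
    and "n \<le> N"
  shows "(\<integral>\<^sup>+w. g w \<partial>path_pmf N) = (\<integral>\<^sup>+w. g w \<partial>path_pmf n)"
proof -
  obtain k where k: "N = n + k" using \<open>n \<le> N\<close> le_Suc_ex by blast
  have "(\<integral>\<^sup>+w. g w \<partial>path_pmf N) = (\<integral>\<^sup>+w. g w * ennreal 1 \<partial>path_pmf (n + k))" by (simp add: k)
  also have "\<dots> = (\<integral>\<^sup>+w. g w * ennreal (\<Sum>x\<le>r. 1 * Mpow k x (last_state w)) \<partial>path_pmf n)"
    using nn_integral_path_pmf_add_state[OF g, where h="\<lambda>_. 1" and k=k] by simp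
  also have "\<dots> = (\<integral>\<^sup>+w. g w \<partial>path_pmf n)"
    using path_pmf_supportD by (auto intro!: nn_integral_cong_AE AE_pmfI simp: Mpow_col_sum)
  finally show ?thesis .
qed

lemma nn_integral_step_pmf_emission:
  assumes z: "z \<le> r" and h: "\<And>b. b \<le> r \<Longrightarrow> 0 \<le> h b"
    and \<Phi>0: "\<Phi> 0 = 0"
    and c0: "(\<integral>\<^sup>+y. ennreal (\<Phi> y) \<partial>p00) = ennreal c0" and c1: "(\<integral>\<^sup>+y. ennreal (\<Phi> y) \<partial>p10) = ennreal c1"
    and "0 \<le> c0" "0 \<le> c1"
  shows "(\<integral>\<^sup>+e. ennreal (\<Phi> (snd (snd e))) * ennreal (h (fst (snd e))) \<partial>step_pmf z) =
     ennreal (Mell r q 0 z * (\<Sum>b\<le>r. q b 0 * (if b = 0 then c0 else c1) * h b))"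
proof -
  define c where "c b = (if b = 0 then c0 else c1)" for b :: nat
  have c_nonneg: "0 \<le> c b" for b using assms by (simp add: c_def)
  txt \<open>Photons are only emitted when \<open>X'_t = 0\<close>; otherwise \<open>Y_t = 0\<close>, which \<open>\<Phi>\<close> annihilates.\<close>
  have emission: "(\<integral>\<^sup>+y. ennreal (\<Phi> y) * ennreal (h b) \<partial>emis p00 p10 b a)
      = ennreal (if a = 0 then c b * h b else 0)" if "b \<le> r" for a b
    using that h c_nonneg c0 c1 \<Phi>0
    by (cases "a = 0") (simp_all add: emis_def c_def nn_integral_multc ennreal_mult)
  have "(\<integral>\<^sup>+e. ennreal (\<Phi> (snd (snd e))) * ennreal (h (fst (snd e))) \<partial>step_pmf z)
      = (\<Sum>a\<le>r. \<Sum>b\<le>r. ennreal (Mell r q a z * Ms q b a * (if a = 0 then c b * h b else 0)))"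
    using z h c_nonneg
    by (auto simp: nn_integral_step_pmf emission Mell_nonneg Ms_nonneg ennreal_mult[symmetric] intro!: sum.cong)
  also have "\<dots> = ennreal (\<Sum>a\<le>r. \<Sum>b\<le>r. Mell r q a z * Ms q b a * (if a = 0 then c b * h b else 0))"
    using z h c_nonneg by (intro sum_sum_ennreal mult_nonneg_nonneg) (simp_all add: Mell_nonneg Ms_nonneg)
  also have "(\<Sum>a\<le>r. \<Sum>b\<le>r. Mell r q a z * Ms q b a * (if a = 0 then c b * h b else 0))
      = Mell r q 0 z * (\<Sum>b\<le>r. q b 0 * c b * h b)"
  proof -
    have "(\<Sum>a\<le>r. \<Sum>b\<le>r. Mell r q a z * Ms q b a * (if a = 0 then c b * h b else 0))
        = (\<Sum>a\<le>r. if a = 0 then (\<Sum>b\<le>r. Mell r q 0 z * Ms q b 0 * (c b * h b)) else 0)"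
      by (intro sum.cong) auto
    then show ?thesis by (simp add: sum_distrib_left Ms_def mult_ac)
  qed
  finally show ?thesis by (simp add: c_def)
qed

lemma nn_integral_path_pmf_Suc_emission:
  assumes g: "\<And>w e. w \<in> set_pmf (path_pmf n) \<Longrightarrow> g (extend w e) = g w"
    and h: "\<And>b. b \<le> r \<Longrightarrow> 0 \<le> h b"
    and \<Phi>0: "\<Phi> 0 = 0"
    and c0: "(\<integral>\<^sup>+y. ennreal (\<Phi> y) \<partial>p00) = ennreal c0" and c1: "(\<integral>\<^sup>+y. ennreal (\<Phi> y) \<partial>p10) = ennreal c1"
    and c0nn: "0 \<le> c0" and c1nn: "0 \<le> c1"
  shows "(\<integral>\<^sup>+w. g w * ennreal (\<Phi> (Yobs (Suc n) w)) * ennreal (h (last_state w)) \<partial>path_pmf (Suc n)) =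
    (\<integral>\<^sup>+w. g w * ennreal (Mell r q 0 (last_state w) * (\<Sum>b\<le>r. q b 0 * (if b = 0 then c0 else c1) * h b)) \<partial>path_pmf n)"
proof -
  have "(\<integral>\<^sup>+w. g w * ennreal (\<Phi> (Yobs (Suc n) w)) * ennreal (h (last_state w)) \<partial>path_pmf (Suc n))
      = (\<integral>\<^sup>+w. g w * (\<integral>\<^sup>+e. ennreal (\<Phi> (snd (snd e))) * ennreal (h (fst (snd e))) \<partial>step_pmf (last_state w)) \<partial>path_pmf n)"
    by (auto intro!: nn_integral_cong_AE AE_pmfI
        simp: g Yobs_extend_last last_state_extend nn_integral_cmult mult.assoc)
  also have "\<dots> = (\<integral>\<^sup>+w. g w * ennreal (Mell r q 0 (last_state w) * (\<Sum>b\<le>r. q b 0 * (if b = 0 then c0 else c1) * h b)) \<partial>path_pmf n)"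
  proof (intro nn_integral_cong_AE AE_pmfI)
    fix w assume "w \<in> set_pmf (path_pmf n)"
    then have "last_state w \<le> r" by (simp add: path_pmf_supportD)
    then show "g w * (\<integral>\<^sup>+e. ennreal (\<Phi> (snd (snd e))) * ennreal (h (fst (snd e))) \<partial>step_pmf (last_state w))
        = g w * ennreal (Mell r q 0 (last_state w) * (\<Sum>b\<le>r. q b 0 * (if b = 0 then c0 else c1) * h b))"
      using nn_integral_step_pmf_emission[where h=h and \<Phi>=\<Phi>, OF _ h \<Phi>0 c0 c1 c0nn c1nn] by simp
  qed
  finally show ?thesis .
qed

end

locale htmm_diagonalised = htmm_model +
  fixes V Vi :: "nat \<Rightarrow> nat \<Rightarrow> complex" and lam :: "nat \<Rightarrow> complex"
  assumes V_inv1: "\<And>x z. x \<le> r \<Longrightarrow> z \<le> r \<Longrightarrow> (\<Sum>y\<le>r. V x y * Vi y z) = (if x = z then 1 else 0)"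
    and V_inv2: "\<And>x z. x \<le> r \<Longrightarrow> z \<le> r \<Longrightarrow> (\<Sum>y\<le>r. Vi x y * V y z) = (if x = z then 1 else 0)"
    and M_diag: "\<And>x z. x \<le> r \<Longrightarrow> z \<le> r \<Longrightarrow> complex_of_real (Mfull r q x z) = (\<Sum>y\<le>r. V x y * lam y * Vi y z)"
begin

lemma Mpow_spectral:
  assumes "x \<le> r" "z \<le> r"
  shows "complex_of_real (Mpow n x z) = (\<Sum>y\<le>r. V x y * lam y ^ n * Vi y z)"
  using \<open>z \<le> r\<close>
proof (induction n arbitrary: z)
  case 0
  then show ?case using V_inv1 \<open>x \<le> r\<close> by simp
next
  case (Suc n)
  have "complex_of_real (Mpow (Suc n) x z)
      = (\<Sum>y\<le>r. (\<Sum>u\<le>r. V x u * lam u ^ n * Vi u y) * (\<Sum>w\<le>r. V y w * lam w * Vi w z))"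
    using Suc by (simp add: M_diag)
  also have "\<dots> = (\<Sum>u\<le>r. \<Sum>w\<le>r. \<Sum>y\<le>r. (V x u * lam u ^ n * Vi u y) * (V y w * lam w * Vi w z))"
    unfolding sum_product by (subst sum.swap, rule sum.cong[OF refl], rule sum.swap)
  also have "\<dots> = (\<Sum>u\<le>r. \<Sum>w\<le>r. V x u * lam u ^ n * (\<Sum>y\<le>r. Vi u y * V y w) * (lam w * Vi w z))"
    by (simp add: sum_distrib_left sum_distrib_right mult_ac)
  also have "\<dots> = (\<Sum>u\<le>r. \<Sum>w\<le>r. V x u * lam u ^ n * (if u = w then 1 else 0) * (lam w * Vi w z))"
    by (intro sum.cong refl) (simp add: V_inv2)
  also have "\<dots> = (\<Sum>u\<le>r. V x u * lam u ^ Suc n * Vi u z)"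
    by (simp add: if_distrib if_distribR mult_ac cong: if_cong)
  finally show ?case .
qed

lemma state_prob_spectral:
  assumes "x \<le> r"
  shows "complex_of_real (state_prob n x) = (\<Sum>y\<le>r. V x y * lam y ^ n * (\<Sum>z\<le>r. Vi y z * complex_of_real (\<nu> z)))"
proof -
  have "complex_of_real (state_prob n x) = (\<Sum>z\<le>r. \<Sum>y\<le>r. V x y * lam y ^ n * Vi y z * complex_of_real (\<nu> z))"
    using Mpow_spectral[OF \<open>x \<le> r\<close>]
    by (simp add: state_prob_def sum_distrib_right del: Mpow.simps)
  then show ?thesis
    by (subst (asm) sum.swap) (simp add: sum_distrib_left mult_ac)
qed

end

section \<open>Moments of the photon counts\<close>

locale htmm_moments = htmm_model +
  assumes q00_pos: "0 < q 0 0"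
    and p00_square_integrable: "integrable p00 (\<lambda>n. (real n)\<^sup>2)"
    and p10_square_integrable: "integrable p10 (\<lambda>n. (real n)\<^sup>2)"
begin

definition cond_mom2 :: real where
  "cond_mom2 = q 0 0 * mom2_pmf p00 + (1 - q 0 0) * mom2_pmf p10"

text \<open>\<open>lag_moment d\<close> is \<open>E[Y_t'; X_(t'+d) = 0 | X'_t' = 0]\<close>: the emission at time \<open>t'\<close>,
  counted only if the chain is back in state 0 after \<open>d\<close> more steps.\<close>

definition lag_moment :: "nat \<Rightarrow> real" where
  "lag_moment d = (\<Sum>b\<le>r. q b 0 * (if b = 0 then mean_pmf p00 else mean_pmf p10) * Mpow d 0 b)"

lemma lag_moment_eq:
  "lag_moment d = q 0 0 * mean_pmf p00 * Mpow d 0 0 + mean_pmf p10 * (Mpow (Suc d) 0 0 - q 0 0 * Mpow d 0 0)"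
  unfolding lag_moment_def by (simp only: sum_q_col0_weighted Mpow_Suc_col0)

lemma emission_moments:
  "(\<integral>\<^sup>+y. ennreal (real y) \<partial>p00) = ennreal (mean_pmf p00)" "0 \<le> mean_pmf p00"
  "(\<integral>\<^sup>+y. ennreal (real y) \<partial>p10) = ennreal (mean_pmf p10)" "0 \<le> mean_pmf p10"
  "(\<integral>\<^sup>+y. ennreal ((real y)\<^sup>2) \<partial>p00) = ennreal (mom2_pmf p00)" "0 \<le> mom2_pmf p00"
  "(\<integral>\<^sup>+y. ennreal ((real y)\<^sup>2) \<partial>p10) = ennreal (mom2_pmf p10)" "0 \<le> mom2_pmf p10"
  using p00_square_integrable p10_square_integrable
  by (auto simp: mean_pmf_def mom2_pmf_def nn_integral_eq_integral integrable_real_of_square)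

lemma theta1_nonneg: "0 \<le> theta1 q p00 p10"
  using emission_moments q_range[of 0 0] by (simp add: theta1_def)

lemma cond_mom2_nonneg: "0 \<le> cond_mom2"
  using emission_moments q_range[of 0 0] by (simp add: cond_mom2_def)

lemma lag_moment_nonneg: "0 \<le> lag_moment d"
  using emission_moments q_range
  by (auto simp: lag_moment_def intro!: sum_nonneg mult_nonneg_nonneg Mpow_nonneg simp del: Mpow.simps)

lemma nn_integral_Yobs_moment:
  assumes t: "1 \<le> t" "t \<le> n" and \<Phi>0: "\<Phi> 0 = 0"
    and c0: "(\<integral>\<^sup>+y. ennreal (\<Phi> y) \<partial>p00) = ennreal c0" and c1: "(\<integral>\<^sup>+y. ennreal (\<Phi> y) \<partial>p10) = ennreal c1"
    and "0 \<le> c0" "0 \<le> c1"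
  shows "(\<integral>\<^sup>+w. ennreal (\<Phi> (Yobs t w)) \<partial>path_pmf n)
       = ennreal ((q 0 0 * c0 + (1 - q 0 0) * c1) * state_prob t 0 / q 0 0)"
proof -
  obtain s where s: "t = Suc s" using t by (cases t) auto
  have "(\<integral>\<^sup>+w. ennreal (\<Phi> (Yobs t w)) \<partial>path_pmf n) = (\<integral>\<^sup>+w. ennreal (\<Phi> (Yobs t w)) \<partial>path_pmf t)"
    using t by (intro nn_integral_path_pmf_restrict) (auto simp: Yobs_extend)
  also have "\<dots> = (\<integral>\<^sup>+w. 1 * ennreal (\<Phi> (Yobs (Suc s) w)) * ennreal 1 \<partial>path_pmf (Suc s))"
    by (simp add: s)
  also have "\<dots> = (\<integral>\<^sup>+w. ennreal (Mell r q 0 (last_state w) * (q 0 0 * c0 + (1 - q 0 0) * c1)) \<partial>path_pmf s)"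
    using nn_integral_path_pmf_Suc_emission[where g="\<lambda>_. 1" and h="\<lambda>_. 1", OF _ _ \<Phi>0 c0 c1] assms
    by (simp add: sum_q_col0_split)
  also have "\<dots> = ennreal ((q 0 0 * c0 + (1 - q 0 0) * c1) * (\<Sum>x\<le>r. Mell r q 0 x * state_prob s x))"
    using assms q_range[of 0 0]
    by (subst nn_integral_last_state)
       (auto simp: sum_distrib_left mult_ac intro!: mult_nonneg_nonneg add_nonneg_nonneg Mell_nonneg)
  also have "\<dots> = ennreal ((q 0 0 * c0 + (1 - q 0 0) * c1) * state_prob t 0 / q 0 0)"
    using q00_pos by (simp add: s state_prob_Suc_0)
  finally show ?thesis .
qed

lemma nn_integral_Yobs:
  "1 \<le> t \<Longrightarrow> t \<le> n \<Longrightarrow> (\<integral>\<^sup>+w. ennreal (real (Yobs t w)) \<partial>path_pmf n)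
     = ennreal (theta1 q p00 p10 * state_prob t 0 / q 0 0)"
  using nn_integral_Yobs_moment[where \<Phi>=real] emission_moments by (simp add: theta1_def)

lemma nn_integral_Yobs_square:
  "1 \<le> t \<Longrightarrow> t \<le> n \<Longrightarrow> (\<integral>\<^sup>+w. ennreal ((real (Yobs t w))\<^sup>2) \<partial>path_pmf n)
     = ennreal (cond_mom2 * state_prob t 0 / q 0 0)"
  using nn_integral_Yobs_moment[where \<Phi>="\<lambda>y. (real y)\<^sup>2"] emission_moments by (simp add: cond_mom2_def)

lemma nn_integral_Yobs_given_past:
  assumes g: "\<And>k w e. t' \<le> k \<Longrightarrow> w \<in> set_pmf (path_pmf k) \<Longrightarrow> g (extend w e) = g w"
    and t: "t' < t" "t \<le> n"
  shows "(\<integral>\<^sup>+w. g w * ennreal (real (Yobs t w)) \<partial>path_pmf n)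
       = (\<integral>\<^sup>+w. g w * ennreal (theta1 q p00 p10 / q 0 0 * Mpow (t - t') 0 (last_state w)) \<partial>path_pmf t')"
proof -
  define \<theta> where "\<theta> = theta1 q p00 p10"
  define s k where "s = t - 1" and "k = t - 1 - t'"
  have s: "t = Suc s" "s = t' + k" "t - t' = Suc k" using t by (auto simp: s_def k_def)
  have "g (extend w e) * ennreal (real (Yobs t (extend w e))) = g w * ennreal (real (Yobs t w))"
    if "t \<le> k" "w \<in> set_pmf (path_pmf k)" for k w e
    using that t g[of k w e] Yobs_extend[of w k t e] by simp
  then have "(\<integral>\<^sup>+w. g w * ennreal (real (Yobs t w)) \<partial>path_pmf n)
      = (\<integral>\<^sup>+w. g w * ennreal (real (Yobs t w)) \<partial>path_pmf t)"
    using t by (intro nn_integral_path_pmf_restrict) auto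
  also have "\<dots> = (\<integral>\<^sup>+w. g w * ennreal (real (Yobs (Suc s) w)) * ennreal 1 \<partial>path_pmf (Suc s))"
    by (simp add: s(1))
  also have "\<dots> = (\<integral>\<^sup>+w. g w * ennreal (Mell r q 0 (last_state w)
      * (\<Sum>b\<le>r. q b 0 * (if b = 0 then mean_pmf p00 else mean_pmf p10) * 1)) \<partial>path_pmf s)"
    using emission_moments g[of s] s
    by (intro nn_integral_path_pmf_Suc_emission[where h="\<lambda>_. 1" and \<Phi>=real]) simp_all
  also have "\<dots> = (\<integral>\<^sup>+w. g w * ennreal (Mell r q 0 (last_state w) * \<theta>) \<partial>path_pmf (t' + k))"
    by (simp add: sum_q_col0_split \<theta>_def theta1_def s(2))
  also have "\<dots> = (\<integral>\<^sup>+w. g w * ennreal (\<Sum>x\<le>r. Mell r q 0 x * \<theta> * Mpow k x (last_state w)) \<partial>path_pmf t')"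
    using g theta1_nonneg by (intro nn_integral_path_pmf_add_state) (auto simp: \<theta>_def Mell_nonneg)
  also have "\<dots> = (\<integral>\<^sup>+w. g w * ennreal (\<theta> / q 0 0 * Mpow (t - t') 0 (last_state w)) \<partial>path_pmf t')"
    using q00_pos path_pmf_supportD
    by (intro nn_integral_cong_AE AE_pmfI)
       (simp add: s(3) Mpow_Suc_row0 sum_distrib_left mult_ac del: Mpow.simps)
  finally show ?thesis by (simp add: \<theta>_def)
qed

lemma nn_integral_Yobs_mult:
  assumes t: "1 \<le> t'" "t' < t" "t \<le> n"
  shows "(\<integral>\<^sup>+w. ennreal (real (Yobs t w) * real (Yobs t' w)) \<partial>path_pmf n)
       = ennreal (state_prob t' 0 / q 0 0 * (theta1 q p00 p10 / q 0 0) * lag_moment (t - t'))"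
proof -
  define h where "h z = theta1 q p00 p10 / q 0 0 * Mpow (t - t') 0 z" for z
  have h: "0 \<le> h z" if "z \<le> r" for z
    using that q00_pos theta1_nonneg Mpow_nonneg[where x=0 and z=z and n="t - t'"]
    by (simp add: h_def del: Mpow.simps)
  define C where "C = (\<Sum>b\<le>r. q b 0 * (if b = 0 then mean_pmf p00 else mean_pmf p10) * h b)"
  have C: "C = theta1 q p00 p10 / q 0 0 * lag_moment (t - t')"
    by (simp add: C_def h_def lag_moment_def sum_distrib_left mult_ac del: Mpow.simps)
  have C_nonneg: "0 \<le> C"
    using h emission_moments q_range by (auto simp: C_def intro!: sum_nonneg mult_nonneg_nonneg)
  obtain s' where s': "t' = Suc s'" using t by (cases t') auto
  have "(\<integral>\<^sup>+w. ennreal (real (Yobs t w) * real (Yobs t' w)) \<partial>path_pmf n)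
      = (\<integral>\<^sup>+w. ennreal (real (Yobs t' w)) * ennreal (real (Yobs t w)) \<partial>path_pmf n)"
    by (simp add: ennreal_mult mult.commute)
  also have "\<dots> = (\<integral>\<^sup>+w. 1 * ennreal (real (Yobs (Suc s') w)) * ennreal (h (last_state w)) \<partial>path_pmf (Suc s'))"
    using t by (subst nn_integral_Yobs_given_past) (auto simp: Yobs_extend h_def s')
  also have "\<dots> = (\<integral>\<^sup>+w. 1 * ennreal (Mell r q 0 (last_state w) * C) \<partial>path_pmf s')"
    using h emission_moments unfolding C_def
    by (intro nn_integral_path_pmf_Suc_emission[where h=h and \<Phi>=real]) auto
  also have "\<dots> = ennreal (C * (\<Sum>x\<le>r. Mell r q 0 x * state_prob s' x))"
    using nn_integral_last_state[of "\<lambda>z. Mell r q 0 z * C"] C_nonneg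
    by (simp add: Mell_nonneg sum_distrib_left mult_ac)
  also have "\<dots> = ennreal (state_prob t' 0 / q 0 0 * C)"
    using q00_pos by (simp add: s' state_prob_Suc_0 mult.commute)
  finally show ?thesis by (simp add: C mult.assoc)
qed

lemma Ysum_eq: "Ysum m t = (\<lambda>\<omega>. \<Sum>k<m. real (Yobs t (\<omega> k)))"
  by (simp add: Ysum_def fun_eq_iff)

lemma htmm_copies_eq: "htmm_copies m (htmm r n q \<nu> p00 p10) = Pi_pmf {..<m} undefined (\<lambda>_. path_pmf n)"
  by (simp add: htmm_copies_def htmm_eq_path_pmf)

lemma Yobs_integrable_expectation:
  assumes "1 \<le> t" "t \<le> n"
  shows "integrable (path_pmf n) (\<lambda>w. real (Yobs t w))"
    and "measure_pmf.expectation (path_pmf n) (\<lambda>w. real (Yobs t w)) = theta1 q p00 p10 * state_prob t 0 / q 0 0"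
    and "integrable (path_pmf n) (\<lambda>w. real (Yobs t w) * real (Yobs t w))"
    and "measure_pmf.expectation (path_pmf n) (\<lambda>w. real (Yobs t w) * real (Yobs t w)) = cond_mom2 * state_prob t 0 / q 0 0"
  using integrable_expectation_of_nn_integral[OF _ _ nn_integral_Yobs[OF assms]]
    integrable_expectation_of_nn_integral[OF _ _ nn_integral_Yobs_square[OF assms]]
    theta1_nonneg cond_mom2_nonneg q00_pos state_prob_nonneg[of 0 t]
  by (simp_all add: power2_eq_square)

lemma expectation_Ysum:
  assumes "1 \<le> t" "t \<le> n"
  shows "measure_pmf.expectation (htmm_copies m (htmm r n q \<nu> p00 p10)) (Ysum m t)
    = real m * (theta1 q p00 p10 * state_prob t 0 / q 0 0)"
  using Yobs_integrable_expectation[OF assms] expectation_sum_iid[where f="\<lambda>w. real (Yobs t w)"]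
  by (simp add: htmm_copies_eq Ysum_eq)

lemma variance_Ysum:
  assumes "1 \<le> t" "t \<le> n"
  shows "pmf_cov (htmm_copies m (htmm r n q \<nu> p00 p10)) (Ysum m t) (Ysum m t)
    = real m * (cond_mom2 * state_prob t 0 / q 0 0 - (theta1 q p00 p10 * state_prob t 0 / q 0 0)\<^sup>2)"
  using Yobs_integrable_expectation[OF assms]
    pmf_cov_sum_iid[where f="\<lambda>w. real (Yobs t w)" and g="\<lambda>w. real (Yobs t w)"]
  by (simp add: htmm_copies_eq Ysum_eq pmf_cov_eq power2_eq_square)

lemma covariance_Ysum:
  assumes "1 \<le> t'" "t' < t" "t \<le> n"
  shows "pmf_cov (htmm_copies m (htmm r n q \<nu> p00 p10)) (Ysum m t) (Ysum m t')
    = real m * (state_prob t' 0 / q 0 0 * (theta1 q p00 p10 / q 0 0) * lag_moment (t - t')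
        - theta1 q p00 p10 * state_prob t 0 / q 0 0 * (theta1 q p00 p10 * state_prob t' 0 / q 0 0))"
proof -
  have t: "1 \<le> t" "t \<le> n" and t': "1 \<le> t'" "t' \<le> n" using assms by auto
  have nonneg: "0 \<le> state_prob t' 0 / q 0 0 * (theta1 q p00 p10 / q 0 0) * lag_moment (t - t')"
    using state_prob_nonneg[of 0 t'] q00_pos theta1_nonneg lag_moment_nonneg by simp
  note mult = integrable_expectation_of_nn_integral[OF _ nonneg nn_integral_Yobs_mult[OF assms]]
  show ?thesis
    using Yobs_integrable_expectation[OF t] Yobs_integrable_expectation[OF t'] mult
      pmf_cov_sum_iid[where f="\<lambda>w. real (Yobs t w)" and g="\<lambda>w. real (Yobs t' w)"]
    by (simp add: htmm_copies_eq Ysum_eq pmf_cov_eq)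
qed

lemma variance_Ysum_theta:
  assumes "1 \<le> t" "t \<le> n" "1 \<le> m" "theta1 q p00 p10 \<noteq> 0"
  shows "pmf_cov (htmm_copies m (htmm r n q \<nu> p00 p10)) (Ysum m t) (Ysum m t)
    = (real m * theta1 q p00 p10 * (theta3 q p00 p10 + 1) + real m
        - real m * theta1 q p00 p10 * (state_prob t 0 / q 0 0))
      * (real m * theta1 q p00 p10 * (state_prob t 0 / q 0 0)) / real m"
proof -
  have "cond_mom2 = (theta1 q p00 p10)\<^sup>2 * (theta3 q p00 p10 + 1) + theta1 q p00 p10"
    using assms(4) by (subst theta3_plus_one[OF assms(4)]) (simp add: cond_mom2_def field_simps power2_eq_square)
  then show ?thesis
    unfolding variance_Ysum[OF assms(1,2)] using assms q00_pos by (simp add: field_simps power2_eq_square)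
qed

lemma covariance_Ysum_theta:
  assumes "1 \<le> t'" "t' < t" "t \<le> n" "1 \<le> m" "theta1 q p00 p10 \<noteq> 0" "q 0 0 \<noteq> 1"
  shows "pmf_cov (htmm_copies m (htmm r n q \<nu> p00 p10)) (Ysum m t) (Ysum m t')
    = ((theta2 q p00 p10 - q 0 0 * (1 - theta2 q p00 p10) / (1 - q 0 0))
          * (real m * theta1 q p00 p10 * (Mpow (t - t') 0 0 / q 0 0))
        + (1 - theta2 q p00 p10) / (1 - q 0 0)
          * (real m * theta1 q p00 p10 * (Mpow (t - t' + 1) 0 0 / q 0 0))
        - real m * theta1 q p00 p10 * (state_prob t 0 / q 0 0))
      * (real m * theta1 q p00 p10 * (state_prob t' 0 / q 0 0)) / real m"
  unfolding covariance_Ysum[OF assms(1-3)] lag_moment_eq theta2_coefficients[OF assms(5,6)]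
  using assms q00_pos by (simp add: field_simps del: Mpow.simps)

end

theorem mainTheorem6:
  fixes r T m :: nat
    and q :: "nat \<Rightarrow> nat \<Rightarrow> real"
    and \<nu> :: "nat \<Rightarrow> real"
    and p00 p10 :: "nat pmf"
    and V Vi :: "nat \<Rightarrow> nat \<Rightarrow> complex"
    and lam :: "nat \<Rightarrow> complex"
    and \<alpha> \<alpha>0 \<alpha>1 :: "nat \<Rightarrow> complex"
    and \<mu> \<mu>0 :: "nat \<Rightarrow> complex"
  assumes r_pos: "r \<ge> 1" and T_pos: "T \<ge> 1" and m_pos: "m \<ge> 1"
    and q_range: "\<And>x z. x \<le> r \<Longrightarrow> z \<le> r - 1 \<Longrightarrow> 0 \<le> q x z \<and> q x z \<le> 1"
    and q_stoch: "\<And>z. z \<le> r - 1 \<Longrightarrow> (\<Sum>x\<le>r. q x z) = 1"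
    and \<nu>_nonneg: "\<And>x. x \<le> r \<Longrightarrow> 0 \<le> \<nu> x"
    and \<nu>_sum: "(\<Sum>x\<le>r. \<nu> x) = 1"
    and q00: "0 < q 0 0" "q 0 0 < 1"
    and th1_pos: "theta1 q p00 p10 > 0"
    and mgf00: "\<exists>\<epsilon>>0. \<forall>s. \<bar>s\<bar> < \<epsilon> \<longrightarrow> integrable (measure_pmf p00) (\<lambda>n. exp (s * real n))"
    and mgf10: "\<exists>\<epsilon>>0. \<forall>s. \<bar>s\<bar> < \<epsilon> \<longrightarrow> integrable (measure_pmf p10) (\<lambda>n. exp (s * real n))"
    and V_inv1: "\<And>x z. x \<le> r \<Longrightarrow> z \<le> r \<Longrightarrow>
                   (\<Sum>y\<le>r. V x y * Vi y z) = (if x = z then 1 else 0)"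
    and V_inv2: "\<And>x z. x \<le> r \<Longrightarrow> z \<le> r \<Longrightarrow>
                   (\<Sum>y\<le>r. Vi x y * V y z) = (if x = z then 1 else 0)"
    and M_diag: "\<And>x z. x \<le> r \<Longrightarrow> z \<le> r \<Longrightarrow>
                   complex_of_real (Mfull r q x z) = (\<Sum>y\<le>r. V x y * lam y * Vi y z)"
    and lam_r: "lam r = 1"
    and V_col_r: "\<And>x. x \<le> r \<Longrightarrow> V x r = (if x = r then 1 else 0)"
    and \<alpha>_def: "\<And>x. \<alpha> x = V 0 x * lam x / complex_of_real (q 0 0)
                          * (\<Sum>z\<le>r. Vi x z * complex_of_real (\<nu> z))"
    and \<alpha>0_def: "\<And>x. \<alpha>0 x = lam x / complex_of_real (q 0 0) * V 0 x * Vi x 0"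
    and \<alpha>1_def: "\<And>x. \<alpha>1 x = lam x / complex_of_real (q 0 0) * V 0 x
                   * (\<Sum>z\<le>r. Vi x z * complex_of_real ((if z = 0 then 0 else \<nu> z) / (1 - \<nu> 0)))"
    and \<mu>_def: "\<And>t. \<mu> t = of_nat m * complex_of_real (theta1 q p00 p10)
                          * (\<Sum>x\<le>r. \<alpha> x * lam x ^ (t - 1))"
    and \<mu>0_def: "\<And>t. \<mu>0 t = of_nat m * complex_of_real (theta1 q p00 p10)
                          * (\<Sum>x\<le>r. \<alpha>0 x * lam x ^ (t - 1))"
  shows
    "(\<forall>t\<in>{1..T}. complex_of_real (measure_pmf.expectation
          (htmm_copies m (htmm r T q \<nu> p00 p10)) (Ysum m t)) = \<mu> t)
   \<and> (\<nu> 0 < 1 \<longrightarrow> (\<forall>t\<in>{1..T}. \<mu> t = of_nat m * complex_of_real (theta1 q p00 p10)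
          * (\<Sum>x\<le>r - 1. (complex_of_real (\<nu> 0) * \<alpha>0 x + complex_of_real (1 - \<nu> 0) * \<alpha>1 x)
                           * lam x ^ (t - 1))))
   \<and> (\<forall>t\<in>{1..T}. complex_of_real (pmf_cov (htmm_copies m (htmm r T q \<nu> p00 p10))
          (Ysum m t) (Ysum m t))
        = (of_nat m * complex_of_real (theta1 q p00 p10) * complex_of_real (theta3 q p00 p10 + 1)
           + of_nat m - \<mu> t) * \<mu> t / of_nat m)
   \<and> (\<forall>t\<in>{1..T}. \<forall>t'\<in>{1..T}. t' < t \<longrightarrow>
        complex_of_real (pmf_cov (htmm_copies m (htmm r T q \<nu> p00 p10))
          (Ysum m t) (Ysum m t'))
        = (complex_of_real (theta2 q p00 p10 - q 0 0 * (1 - theta2 q p00 p10) / (1 - q 0 0))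
             * \<mu>0 (t - t')
           + complex_of_real ((1 - theta2 q p00 p10) / (1 - q 0 0)) * \<mu>0 (t - t' + 1)
           - \<mu> t) * \<mu> t' / of_nat m)"
proof -
  interpret htmm_moments r q \<nu> p00 p10
    using q_range q_stoch \<nu>_nonneg \<nu>_sum q00
      integrable_square_of_mgf[OF mgf00] integrable_square_of_mgf[OF mgf10]
    by unfold_locales auto
  interpret htmm_diagonalised r q \<nu> p00 p10 V Vi lam
    using V_inv1 V_inv2 M_diag by unfold_locales auto
  have \<theta>1: "theta1 q p00 p10 \<noteq> 0" and q0: "q 0 0 \<noteq> 1" using th1_pos q00 by auto
  have \<mu>_eq: "\<mu> t = complex_of_real (real m * theta1 q p00 p10 * (state_prob t 0 / q 0 0))"
    if "1 \<le> t" for t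
    using that state_prob_spectral[of 0 t]
    by (cases t) (simp_all add: \<mu>_def \<alpha>_def mult_ac flip: sum_divide_distrib)
  have \<mu>0_eq: "\<mu>0 d = complex_of_real (real m * theta1 q p00 p10 * (Mpow d 0 0 / q 0 0))"
    if "1 \<le> d" for d
    using that Mpow_spectral[of 0 0 d]
    by (cases d) (simp_all add: \<mu>0_def \<alpha>0_def mult_ac flip: sum_divide_distrib del: Mpow.simps)
  have "V 0 r = 0" using V_col_r[of 0] r_pos by simp
  note split = mean_coefficients_split[where \<nu>=\<nu> and V=V and Vi=Vi and lam=lam and c="complex_of_real (q 0 0)",
      OF _ r_pos this \<alpha>_def \<alpha>0_def \<alpha>1_def]
  show ?thesis
  proof (intro conjI ballI impI)
    fix t assume "t \<in> {1..T}"
    then show "complex_of_real (measure_pmf.expectation (htmm_copies m (htmm r T q \<nu> p00 p10)) (Ysum m t)) = \<mu> t"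
      using expectation_Ysum[of t T m] by (simp add: \<mu>_eq mult_ac)
  next
    fix t assume "\<nu> 0 < 1"
    then show "\<mu> t = of_nat m * complex_of_real (theta1 q p00 p10)
        * (\<Sum>x\<le>r - 1. (complex_of_real (\<nu> 0) * \<alpha>0 x + complex_of_real (1 - \<nu> 0) * \<alpha>1 x) * lam x ^ (t - 1))"
      by (simp only: \<mu>_def split)
  next
    fix t assume "t \<in> {1..T}"
    then show "complex_of_real (pmf_cov (htmm_copies m (htmm r T q \<nu> p00 p10)) (Ysum m t) (Ysum m t))
      = (of_nat m * complex_of_real (theta1 q p00 p10) * complex_of_real (theta3 q p00 p10 + 1)
         + of_nat m - \<mu> t) * \<mu> t / of_nat m"
      using variance_Ysum_theta[of t T m] m_pos \<theta>1 by (simp add: \<mu>_eq)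
  next
    fix t t' assume "t \<in> {1..T}" "t' \<in> {1..T}" "t' < t"
    then show "complex_of_real (pmf_cov (htmm_copies m (htmm r T q \<nu> p00 p10)) (Ysum m t) (Ysum m t'))
      = (complex_of_real (theta2 q p00 p10 - q 0 0 * (1 - theta2 q p00 p10) / (1 - q 0 0)) * \<mu>0 (t - t')
         + complex_of_real ((1 - theta2 q p00 p10) / (1 - q 0 0)) * \<mu>0 (t - t' + 1) - \<mu> t) * \<mu> t' / of_nat m"
      using covariance_Ysum_theta[of t' t T m] m_pos \<theta>1 q0 by (simp add: \<mu>_eq \<mu>0_eq del: Mpow.simps)
  qed
qed

end
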